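(* Let $\mathcal G$ be a DAG, $\boldsymbol\alpha$ a proper set of directed paths in $\mathcal G$, and $(WY)$ an edge of $\mathcal G$. Then $\lhd_{(WY)}(\boldsymbol\alpha)$ is proper.
   Context: A directed path is a sequence of distinct vertices $A_1\to A_2\to\cdots\to A_k$ joined by directed edges; a prefix subpath is a contiguous initial segment $A_1\to\cdots\to A_m$. A set of directed paths is proper if no path in it is a prefix subpath of another path in it. For an edge $(WY)$ (i.e. $W\to Y$), the funnel operator $\lhd_{(WY)}$ maps a set of directed paths $\boldsymbol\alpha$ to the set obtained by replacing each path of the form $(A,\ldots,W,Y)$ by $(A,\ldots,W)$, removing all paths that contain $W$ but do not have $(W,Y)$ as a suffix, and keeping all other paths intact. *)

theory Defs
  imports Main
begin

definition is_dag :: "'a set \<Rightarrow> ('a \<times> 'a) set \<Rightarrow> bool" where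
  "is_dag V E \<longleftrightarrow> finite V \<and> E \<subseteq> V \<times> V \<and> acyclic E"

definition dpath :: "'a set \<Rightarrow> ('a \<times> 'a) set \<Rightarrow> 'a list \<Rightarrow> bool" where
  "dpath V E p \<longleftrightarrow> p \<noteq> [] \<and> distinct p \<and> set p \<subseteq> V \<and>
     (\<forall>i. Suc i < length p \<longrightarrow> (p ! i, p ! Suc i) \<in> E)"

definition prefix_subpath :: "'a list \<Rightarrow> 'a list \<Rightarrow> bool" where
  "prefix_subpath p q \<longleftrightarrow> p \<noteq> [] \<and> (\<exists>r. q = p @ r)"

definition proper :: "'a list set \<Rightarrow> bool" where
  "proper \<alpha> \<longleftrightarrow> (\<forall>p\<in>\<alpha>. \<forall>q\<in>\<alpha>. p \<noteq> q \<longrightarrow> \<not> prefix_subpath p q)"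

definition funnel :: "'a \<Rightarrow> 'a \<Rightarrow> 'a list set \<Rightarrow> 'a list set" where
  "funnel W Y \<alpha> =
     {butlast p | p. p \<in> \<alpha> \<and> (\<exists>r. p = r @ [W, Y])} \<union> {p \<in> \<alpha>. W \<notin> set p}"

end

theory Submission
  imports Defs
begin

text \<open>Only distinctness of the paths matters: a truncated path ends in \<open>W\<close>, which occurs
  nowhere else on it, so it cannot properly extend anything containing \<open>W\<close>; and whatever it
  extends without containing \<open>W\<close> was already a prefix of the untruncated path in \<open>\<alpha>\<close>.\<close>

lemma funnel_memE:
  assumes "x \<in> funnel W Y \<alpha>"
  obtains "x \<in> \<alpha>" "W \<notin> set x"
  | r where "r @ [W, Y] \<in> \<alpha>" "x = r @ [W]"
  using assms unfolding funnel_def by (auto simp: butlast_append)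

lemma distinct_append_last_in_prefix:
  assumes "distinct (xs @ zs)" "zs \<noteq> []" "last (xs @ zs) \<in> set xs"
  shows False
  using assms by (metis disjoint_iff distinct_append last_in_set last_appendR)

lemma prefix_subpath_append:
  "prefix_subpath x y \<Longrightarrow> prefix_subpath x (y @ z)"
  unfolding prefix_subpath_def by auto

lemma proper_funnel:
  assumes distinct: "\<forall>p\<in>\<alpha>. distinct p" and "proper \<alpha>"
  shows "proper (funnel W Y \<alpha>)"
  unfolding proper_def
proof (intro ballI impI notI)
  fix x y
  assume x: "x \<in> funnel W Y \<alpha>" and y: "y \<in> funnel W Y \<alpha>"
    and "x \<noteq> y" and xy: "prefix_subpath x y"
  then obtain s where "y = x @ s" "s \<noteq> []"
    unfolding prefix_subpath_def by auto
  have x_in_\<alpha>: "x \<in> \<alpha>" if "W \<notin> set x"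
    using x that by (cases rule: funnel_memE) auto
  from y show False
  proof (cases rule: funnel_memE)
    case 1
    then show False
      using x_in_\<alpha> \<open>y = x @ s\<close> \<open>x \<noteq> y\<close> xy \<open>proper \<alpha>\<close> unfolding proper_def by auto
  next
    case (2 r)
    have "distinct (r @ [W])"
      using distinct 2 by auto
    then have "distinct (x @ s)"
      using 2 \<open>y = x @ s\<close> by simp
    then have "W \<notin> set x"
      using distinct_append_last_in_prefix \<open>s \<noteq> []\<close> 2 \<open>y = x @ s\<close> by (metis last_snoc)
    moreover have "prefix_subpath x (r @ [W, Y])"
      using prefix_subpath_append[OF xy, of "[Y]"] 2 by simp
    moreover have "x \<noteq> r @ [W, Y]"
      using \<open>W \<notin> set x\<close> by auto
    ultimately show False
      using x_in_\<alpha> \<open>W \<notin> set x\<close> 2 \<open>proper \<alpha>\<close> unfolding proper_def by blast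
  qed
qed

theorem lemma1:
  fixes V :: "'a set" and E :: "('a \<times> 'a) set" and \<alpha> :: "'a list set" and W Y :: 'a
  assumes "is_dag V E"
    and "\<forall>p\<in>\<alpha>. dpath V E p"
    and "proper \<alpha>"
    and "(W, Y) \<in> E"
  shows "proper (funnel W Y \<alpha>)"
  using assms(2,3) by (auto simp: dpath_def intro: proper_funnel)

end
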